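(* Define $$\mathcal{R}_0=\sqrt{\dfrac{S^0_v}{\mu_v}\int_0^\infty \int_0^\infty \beta_h(\xi+s)\beta_v(\xi)s^0_h(\xi)e^{-\int_\xi^{\xi+s}(\mu_h(u)+r_1(u)+\delta(u))du}\,d\xi\, ds},$$ where $s_h^0(a)=\Lambda_h\exp\left(-\int_0^a\mu_h(s)ds\right)$ and $S_v^0=\Lambda_v/\mu_v$ are the components of the parasite-free equilibrium $E_0=(s_h^0,0,0,S_v^0,0)$. Then $\mathcal{R}_0$ is the basic reproduction number of the age-structured malaria model below; namely, $\mathcal{R}_0$ equals the spectral radius of the next generation operator $K:L^1(0,\infty)\times\mathbb{R}\to L^1(0,\infty)\times\mathbb{R}$, $$K\begin{pmatrix}B_1\\ B_2\end{pmatrix}=\begin{pmatrix}\dfrac{\beta_v s_h^0 B_2}{\mu_v}\\[2mm] S_v^0\int_0^\infty\int_0^\infty \beta_h(\xi+s)B_1(\xi)e^{-\int_\xi^{\xi+s}(\mu_h(u)+\delta(u)+r_1(u))du}\,d\xi\, ds\end{pmatrix},$$ obtained from the linearisation of the model at $E_0$.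
   Context: The model is the age-structured SIRS (humans) / SI (mosquitoes) malaria system, for $t>0$, $a\ge 0$: $(\partial_t+\partial_a)s_h=-\lambda_h s_h-\mu_h(a)s_h+r_2(a)r_h$, $(\partial_t+\partial_a)i_h=\lambda_h s_h-(\mu_h(a)+\delta(a)+r_1(a))i_h$, $(\partial_t+\partial_a)r_h=r_1(a)i_h-(r_2(a)+\mu_h(a))r_h$, $S_v'=\Lambda_v-\lambda_v S_v-\mu_v S_v$, $I_v'=\lambda_v S_v-\mu_v I_v$, with boundary condition $(s_h,i_h,r_h)(t,0)=(\Lambda_h,0,0)$ and forces of infection $\lambda_h(t,a)=\beta_v(a)I_v(t)$, $\lambda_v(t)=\int_0^\infty\beta_h(a)i_h(t,a)da$. Assumptions: there is $\mu_0>0$ with $\mu_h(a)\ge\mu_0$ a.e. and $\mu_v\ge\mu_0$; $\Lambda_h,\Lambda_v,\mu_v>0$; $\beta_v,\beta_h,\mu_h,\delta,r_1,r_2\in L^\infty_+(0,\infty)$; and $\int_0^\infty\int_0^\infty\beta_h(a+s)\beta_v(a)e^{-\mu_0(a+s)}\,da\,ds>0$. *)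

theory Defs
  imports "HOL-Analysis.Analysis"
begin

text \<open>Elements of the complexified state space L^1(0,inf) x C are represented by pairs
  (B1, B2) with B1 :: real => complex Lebesgue integrable on [0,inf); two such pairs
  represent the same element iff B1 agree a.e. on [0,inf) and the scalars agree.\<close>

definition L1R :: "((real \<Rightarrow> complex) \<times> complex) set" where
  "L1R = {(f, c). set_integrable lborel {0..} f}"

definition L1R_eq :: "(real \<Rightarrow> complex) \<times> complex \<Rightarrow> (real \<Rightarrow> complex) \<times> complex \<Rightarrow> bool" where
  "L1R_eq p q \<longleftrightarrow> (AE x in lborel. x \<ge> 0 \<longrightarrow> fst p x = fst q x) \<and> snd p = snd q"

definition shift_op ::
  "complex \<Rightarrow> ((real \<Rightarrow> complex) \<times> complex \<Rightarrow> (real \<Rightarrow> complex) \<times> complex)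
     \<Rightarrow> (real \<Rightarrow> complex) \<times> complex \<Rightarrow> (real \<Rightarrow> complex) \<times> complex" where
  "shift_op l K p = ((\<lambda>x. l * fst p x - fst (K p) x), l * snd p - snd (K p))"

text \<open>Spectrum: l is in the spectrum iff l I - K is not bijective on L^1 x C
  (bounded inverse is then automatic by the open mapping theorem).\<close>
definition in_spectrum ::
  "((real \<Rightarrow> complex) \<times> complex \<Rightarrow> (real \<Rightarrow> complex) \<times> complex) \<Rightarrow> complex \<Rightarrow> bool" where
  "in_spectrum K l \<longleftrightarrow>
     \<not> ((\<forall>p\<in>L1R. L1R_eq (shift_op l K p) ((\<lambda>_. 0), 0) \<longrightarrow> L1R_eq p ((\<lambda>_. 0), 0)) \<and>
        (\<forall>g\<in>L1R. \<exists>p\<in>L1R. L1R_eq (shift_op l K p) g))"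

definition spectral_radius ::
  "((real \<Rightarrow> complex) \<times> complex \<Rightarrow> (real \<Rightarrow> complex) \<times> complex) \<Rightarrow> real" where
  "spectral_radius K = Sup (cmod ` {l. in_spectrum K l})"

definition Linf_plus :: "(real \<Rightarrow> real) \<Rightarrow> bool" where
  "Linf_plus f \<longleftrightarrow> f \<in> borel_measurable lborel \<and>
     (\<exists>C. AE a in lborel. a \<ge> 0 \<longrightarrow> 0 \<le> f a \<and> f a \<le> C)"

definition s0h :: "real \<Rightarrow> (real \<Rightarrow> real) \<Rightarrow> real \<Rightarrow> real" where
  "s0h Lh muh a = Lh * exp (- (LBINT s:{0..a}. muh s))"

definition Gam :: "(real \<Rightarrow> real) \<Rightarrow> (real \<Rightarrow> real) \<Rightarrow> (real \<Rightarrow> real) \<Rightarrow> real \<Rightarrow> real \<Rightarrow> real" where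
  "Gam muh r1 delta xi s = exp (- (LBINT u:{xi..xi+s}. muh u + r1 u + delta u))"

definition R0 :: "real \<Rightarrow> real \<Rightarrow> real \<Rightarrow> (real \<Rightarrow> real) \<Rightarrow> (real \<Rightarrow> real) \<Rightarrow> (real \<Rightarrow> real)
   \<Rightarrow> (real \<Rightarrow> real) \<Rightarrow> (real \<Rightarrow> real) \<Rightarrow> real" where
  "R0 Lh Lv muv muh betah betav r1 delta =
     sqrt ((Lv / muv) / muv *
       (LBINT s:{0..}. LBINT xi:{0..}.
          betah (xi + s) * betav xi * s0h Lh muh xi * Gam muh r1 delta xi s))"

definition next_gen_op :: "real \<Rightarrow> real \<Rightarrow> real \<Rightarrow> (real \<Rightarrow> real) \<Rightarrow> (real \<Rightarrow> real) \<Rightarrow> (real \<Rightarrow> real)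
   \<Rightarrow> (real \<Rightarrow> real) \<Rightarrow> (real \<Rightarrow> real)
   \<Rightarrow> (real \<Rightarrow> complex) \<times> complex \<Rightarrow> (real \<Rightarrow> complex) \<times> complex" where
  "next_gen_op Lh Lv muv muh betah betav r1 delta p =
     ((\<lambda>a. complex_of_real (betav a * s0h Lh muh a / muv) * snd p),
      complex_of_real (Lv / muv) *
        (LINT s:{0..}|lborel. LINT xi:{0..}|lborel.
           complex_of_real (betah (xi + s) * Gam muh r1 delta xi s) * fst p xi))"

end

theory Submission
  imports Defs
begin

(* The next generation operator has the off-diagonal form K (B1, B2) = (B2 c, Phi B1) with
   c = beta_v s_h^0 / mu_v in L^1 and Phi a bounded linear functional on L^1 (its kernel
   beta_h(xi + s) Gamma(xi, s) decays like exp (-mu_0 s)).  Hence for l <> 0 the equation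
   (l - K) (B1, B2) = (g1, g2) reduces to the scalar equation (l^2 - Phi c) B2 = l g2 + Phi g1,
   so the spectrum lies in {0} together with the square roots of Phi c, and these are
   eigenvalues with eigenvectors (c, l).  Finally Phi c = R0^2 >= 0. *)

lemma set_integrable_exp_neg:
  fixes m :: real
  assumes "m > 0"
  shows "set_integrable lborel {0..} (\<lambda>x. exp (- m * x))"
proof -
  have "(\<lambda>x. exp (- m * x)) absolutely_integrable_on {0..}"
    by (rule nonnegative_absolutely_integrable_1[OF integrable_on_exp_minus_to_infinity[OF assms]])
       simp
  then show ?thesis
    unfolding set_integrable_def by (subst (asm) integrable_completion) auto
qed

lemma AE_lborel_translate:
  fixes s :: real
  assumes "AE x in lborel. P x"
  shows "AE x in lborel. P (x + s)"
proof -
  have "AE x in distr lborel borel ((+) s). P x"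
    unfolding lborel_distr_plus using assms .
  then have "AE x in lborel. P (s + x)"
    by (rule AE_distrD[rotated]) simp
  then show ?thesis by (simp add: add.commute)
qed

lemma set_integral_interval_lower_bound:
  fixes h :: "real \<Rightarrow> real"
  assumes [measurable]: "h \<in> borel_measurable borel"
    and bounds: "AE u in lborel. u \<ge> 0 \<longrightarrow> m \<le> h u \<and> h u \<le> C"
    and "x \<ge> 0" "t \<ge> 0"
  shows "m * t \<le> (LBINT u:{x..x+t}. h u)"
proof -
  have bounds_on: "AE u in lborel. u \<in> {x..x+t} \<longrightarrow> m \<le> h u \<and> h u \<le> C"
    using bounds by eventually_elim (use \<open>x \<ge> 0\<close> in auto)
  have "set_integrable lborel {x..x+t} (\<lambda>_. m)"
    unfolding set_integrable_def
    by (rule integrableI_bounded_set_indicator[where B="\<bar>m\<bar>"]) (use \<open>t \<ge> 0\<close> in auto)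
  moreover have "set_integrable lborel {x..x+t} h"
    unfolding set_integrable_def
    by (rule integrableI_bounded_set_indicator[where B="max \<bar>m\<bar> \<bar>C\<bar>"])
       (use bounds_on \<open>t \<ge> 0\<close> in \<open>auto elim!: eventually_mono\<close>)
  ultimately have "(LBINT u:{x..x+t}. m) \<le> (LBINT u:{x..x+t}. h u)"
    by (rule set_integral_mono_AE) (use bounds_on in \<open>auto elim!: eventually_mono\<close>)
  moreover have "(LBINT u:{x..x+t}. m) = m * t"
    using \<open>t \<ge> 0\<close> by (subst set_integral_const) (auto simp: measure_def)
  ultimately show ?thesis
    by simp
qed

lemma borel_measurable_set_integral_interval [measurable (raw)]:
  fixes h :: "real \<Rightarrow> real"
  assumes [measurable]: "h \<in> borel_measurable borel"
    and "f \<in> borel_measurable M" "g \<in> borel_measurable M"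
  shows "(\<lambda>x. LBINT u:{f x..g x}. h u) \<in> borel_measurable M"
proof -
  have "(\<lambda>(a, b). LBINT u:{a..b}. h u) \<in> borel_measurable (lborel \<Otimes>\<^sub>M lborel)"
    unfolding set_lebesgue_integral_def indicator_def atLeastAtMost_iff by measurable
  then have "(\<lambda>p. LBINT u:{fst p..snd p}. h u) \<in> borel_measurable (borel \<Otimes>\<^sub>M borel)"
    by (simp add: case_prod_beta' cong: measurable_cong_sets)
  from measurable_compose[OF measurable_Pair[OF assms(2,3)] this] show ?thesis
    by simp
qed

lemma indicator_scaleR_mult:
  "(\<lambda>x. indicator A x *\<^sub>R (g x * f x)) = (\<lambda>x. (g x :: complex) * (indicator A x *\<^sub>R f x))"
  by (simp split: split_indicator)

lemma set_integrable_indicator_measurable: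
  "set_integrable M A f \<Longrightarrow> (\<lambda>x. indicator A x *\<^sub>R f x) \<in> borel_measurable M"
  unfolding set_integrable_def by (rule borel_measurable_integrable)

lemma Linf_plusE:
  assumes "Linf_plus f"
  obtains C where "AE a in lborel. a \<ge> 0 \<longrightarrow> 0 \<le> f a \<and> f a \<le> C"
  using assms by (auto simp: Linf_plus_def)

locale off_diagonal_rank_one =
  fixes c :: "real \<Rightarrow> complex" and \<Phi> :: "(real \<Rightarrow> complex) \<Rightarrow> complex"
  assumes c_integrable: "set_integrable lborel {0..} c"
    and c_nonzero: "\<not> (AE a in lborel. a \<ge> 0 \<longrightarrow> c a = 0)"
    and \<Phi>_add: "\<And>f g. set_integrable lborel {0..} f \<Longrightarrow> set_integrable lborel {0..} g \<Longrightarrow>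
      \<Phi> (\<lambda>x. f x + g x) = \<Phi> f + \<Phi> g"
    and \<Phi>_scale: "\<And>a f. set_integrable lborel {0..} f \<Longrightarrow> \<Phi> (\<lambda>x. a * f x) = a * \<Phi> f"
    and \<Phi>_cong: "\<And>f g. set_integrable lborel {0..} f \<Longrightarrow> set_integrable lborel {0..} g \<Longrightarrow>
      (AE x in lborel. x \<ge> 0 \<longrightarrow> f x = g x) \<Longrightarrow> \<Phi> f = \<Phi> g"
begin

definition K :: "(real \<Rightarrow> complex) \<times> complex \<Rightarrow> (real \<Rightarrow> complex) \<times> complex" where
  "K p = ((\<lambda>a. c a * snd p), \<Phi> (fst p))"

lemma shift_op_K:
  "shift_op l K (B1, B2) = ((\<lambda>x. l * B1 x - c x * B2), l * B2 - \<Phi> B1)"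
  by (simp add: shift_op_def K_def)

lemma in_spectrum_if_square_eq:
  assumes "l\<^sup>2 = \<Phi> c"
  shows "in_spectrum K l"
proof -
  have "(c, l) \<in> L1R"
    using c_integrable by (simp add: L1R_def)
  moreover have "L1R_eq (shift_op l K (c, l)) ((\<lambda>_. 0), 0)"
    using assms by (simp add: L1R_eq_def shift_op_K power2_eq_square mult.commute)
  moreover have "\<not> L1R_eq (c, l) ((\<lambda>_. 0), 0)"
    using c_nonzero by (simp add: L1R_eq_def)
  ultimately show ?thesis
    unfolding in_spectrum_def by blast
qed

lemma shift_op_K_injective:
  assumes "l \<noteq> 0" "l\<^sup>2 \<noteq> \<Phi> c" "(B1, B2) \<in> L1R"
    and "L1R_eq (shift_op l K (B1, B2)) ((\<lambda>_. 0), 0)"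
  shows "L1R_eq (B1, B2) ((\<lambda>_. 0), 0)"
proof -
  have B1: "set_integrable lborel {0..} B1"
    using assms(3) by (simp add: L1R_def)
  have B1_eq: "AE x in lborel. x \<ge> 0 \<longrightarrow> B1 x = B2 / l * c x"
    using assms(4) unfolding L1R_eq_def shift_op_K
    by (auto elim!: eventually_mono simp: field_simps \<open>l \<noteq> 0\<close>)
  have B2_eq: "l * B2 = \<Phi> B1"
    using assms(4) by (simp add: L1R_eq_def shift_op_K)
  have "\<Phi> B1 = \<Phi> (\<lambda>x. B2 / l * c x)"
    using c_integrable by (intro \<Phi>_cong[OF B1 _ B1_eq]) simp
  also have "\<dots> = B2 / l * \<Phi> c"
    using c_integrable by (rule \<Phi>_scale)
  finally have "\<Phi> B1 = B2 / l * \<Phi> c" .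
  with B2_eq \<open>l \<noteq> 0\<close> have "B2 * (l\<^sup>2 - \<Phi> c) = 0"
    by (simp add: field_simps power2_eq_square)
  with assms(2) have "B2 = 0" by simp
  with B1_eq show ?thesis
    by (simp add: L1R_eq_def)
qed

lemma shift_op_K_surjective:
  assumes "l \<noteq> 0" "l\<^sup>2 \<noteq> \<Phi> c" "(g1, g2) \<in> L1R"
  shows "\<exists>p\<in>L1R. L1R_eq (shift_op l K p) (g1, g2)"
proof -
  have g1: "set_integrable lborel {0..} g1"
    using assms(3) by (simp add: L1R_def)
  define B2 where "B2 = (l * g2 + \<Phi> g1) / (l\<^sup>2 - \<Phi> c)"
  define B1 where "B1 = (\<lambda>x. 1 / l * g1 x + B2 / l * c x)"
  have B2: "B2 * (l\<^sup>2 - \<Phi> c) = l * g2 + \<Phi> g1"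
    using assms(2) by (simp add: B2_def)
  have "\<Phi> B1 = \<Phi> (\<lambda>x. 1 / l * g1 x) + \<Phi> (\<lambda>x. B2 / l * c x)"
    unfolding B1_def using g1 c_integrable by (intro \<Phi>_add) auto
  also have "\<dots> = 1 / l * \<Phi> g1 + B2 / l * \<Phi> c"
    using g1 c_integrable by (simp only: \<Phi>_scale)
  finally have "l * B2 - \<Phi> B1 = (B2 * (l\<^sup>2 - \<Phi> c) - \<Phi> g1) / l"
    using assms(1) by (simp add: field_simps power2_eq_square)
  then have "l * B2 - \<Phi> B1 = g2"
    using assms(1) by (simp add: B2)
  moreover have "(B1, B2) \<in> L1R"
    using g1 c_integrable by (simp add: L1R_def B1_def)
  moreover have "l * B1 x - c x * B2 = g1 x" for x
    using assms(1) by (simp add: B1_def field_simps)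
  ultimately show ?thesis
    by (intro bexI[of _ "(B1, B2)"]) (simp_all add: L1R_eq_def shift_op_K)
qed

lemma spectral_radius_K: "spectral_radius K = sqrt (cmod (\<Phi> c))"
  unfolding spectral_radius_def
proof (rule cSup_eq_maximum)
  show "sqrt (cmod (\<Phi> c)) \<in> cmod ` {l. in_spectrum K l}"
    using in_spectrum_if_square_eq[of "csqrt (\<Phi> c)"]
    by (intro image_eqI[of _ _ "csqrt (\<Phi> c)"]) auto
next
  fix r assume "r \<in> cmod ` {l. in_spectrum K l}"
  then obtain l where r: "r = cmod l" and l: "in_spectrum K l" by blast
  have "l = 0 \<or> l\<^sup>2 = \<Phi> c"
    using l shift_op_K_injective shift_op_K_surjective unfolding in_spectrum_def by fast
  then show "r \<le> sqrt (cmod (\<Phi> c))"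
  proof
    assume "l\<^sup>2 = \<Phi> c"
    then have "cmod (\<Phi> c) = (cmod l)\<^sup>2"
      by (metis norm_power)
    then show ?thesis
      by (simp add: r)
  qed (simp add: r)
qed

end

locale exp_bounded_kernel =
  fixes k :: "real \<Rightarrow> real \<Rightarrow> complex" and m B :: real
  assumes m_pos: "m > 0"
    and k_measurable: "(\<lambda>(x, s). k x s) \<in> borel_measurable (borel \<Otimes>\<^sub>M borel)"
    and k_bound: "\<And>s. s \<ge> 0 \<Longrightarrow> AE x in lborel. x \<ge> 0 \<longrightarrow> norm (k x s) \<le> B * exp (- m * s)"
begin

lemma measurable_kernel [measurable (raw)]:
  assumes "f \<in> borel_measurable M" "g \<in> borel_measurable M"
  shows "(\<lambda>x. k (f x) (g x)) \<in> borel_measurable M"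
  using measurable_compose[OF measurable_Pair[OF assms] k_measurable] by simp

definition kernel_functional :: "(real \<Rightarrow> complex) \<Rightarrow> complex" where
  "kernel_functional f = (LINT s:{0..}|lborel. LINT x:{0..}|lborel. k x s * f x)"

lemma
  assumes f: "set_integrable lborel {0..} f" and "s \<ge> 0"
  shows set_integrable_kernel_section: "set_integrable lborel {0..} (\<lambda>x. k x s * f x)"
    and norm_kernel_section_le: "norm (LINT x:{0..}|lborel. k x s * f x)
      \<le> B * exp (- m * s) * (LINT x:{0..}|lborel. norm (f x))"
proof -
  have [measurable]: "(\<lambda>x. indicator {0..} x *\<^sub>R f x) \<in> borel_measurable borel"
    using set_integrable_indicator_measurable[OF f] by simp
  have bound:
    "AE x in lborel. x \<in> {0..} \<longrightarrow> norm (k x s * f x) \<le> B * exp (- m * s) * norm (f x)"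
    using k_bound[OF \<open>s \<ge> 0\<close>]
    by eventually_elim (auto simp: norm_mult intro!: mult_right_mono)
  have dominant: "set_integrable lborel {0..} (\<lambda>x. B * exp (- m * s) * norm (f x))"
    using set_integrable_norm[OF f] by (rule set_integrable_mult_right)
  moreover have "set_borel_measurable lborel {0..} (\<lambda>x. k x s * f x)"
    unfolding set_borel_measurable_def indicator_scaleR_mult by measurable
  ultimately show integrable: "set_integrable lborel {0..} (\<lambda>x. k x s * f x)"
    by (rule set_integrable_bound)
       (use bound in \<open>eventually_elim, metis abs_ge_self order_trans real_norm_def\<close>)
  have "norm (LINT x:{0..}|lborel. k x s * f x) \<le> (LINT x:{0..}|lborel. norm (k x s * f x))"
    by (rule set_integral_norm_bound[OF integrable])
  also have "\<dots> \<le> (LINT x:{0..}|lborel. B * exp (- m * s) * norm (f x))"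
    using set_integrable_norm[OF integrable] dominant
    by (rule set_integral_mono_AE) (use bound in \<open>auto elim!: eventually_mono\<close>)
  finally show "norm (LINT x:{0..}|lborel. k x s * f x)
      \<le> B * exp (- m * s) * (LINT x:{0..}|lborel. norm (f x))"
    by simp
qed

lemma set_integrable_kernel_outer:
  assumes f: "set_integrable lborel {0..} f"
  shows "set_integrable lborel {0..} (\<lambda>s. LINT x:{0..}|lborel. k x s * f x)"
proof (rule set_integrable_bound)
  have [measurable]: "(\<lambda>x. indicator {0..} x *\<^sub>R f x) \<in> borel_measurable borel"
    using set_integrable_indicator_measurable[OF f] by simp
  show "set_borel_measurable lborel {0..} (\<lambda>s. LINT x:{0..}|lborel. k x s * f x)"
    unfolding set_borel_measurable_def set_lebesgue_integral_def indicator_scaleR_mult by measurable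
  show "set_integrable lborel {0..} (\<lambda>s. B * (LINT x:{0..}|lborel. norm (f x)) * exp (- m * s))"
    using set_integrable_exp_neg[OF m_pos] by (rule set_integrable_mult_right)
  show "AE s in lborel. s \<in> {0..} \<longrightarrow> norm (LINT x:{0..}|lborel. k x s * f x)
      \<le> norm (B * (LINT x:{0..}|lborel. norm (f x)) * exp (- m * s))"
    using norm_kernel_section_le[OF f] by (auto simp: mult_ac intro: order_trans[OF _ abs_ge_self])
qed

lemma kernel_functional_add:
  assumes "set_integrable lborel {0..} f" "set_integrable lborel {0..} g"
  shows "kernel_functional (\<lambda>x. f x + g x) = kernel_functional f + kernel_functional g"
proof -
  have "(LINT x:{0..}|lborel. k x s * (f x + g x))
      = (LINT x:{0..}|lborel. k x s * f x) + (LINT x:{0..}|lborel. k x s * g x)" if "s \<ge> 0" for s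
    using set_integrable_kernel_section[OF assms(1) that]
      set_integrable_kernel_section[OF assms(2) that]
    by (simp add: distrib_left set_integral_add)
  then have "kernel_functional (\<lambda>x. f x + g x)
      = (LINT s:{0..}|lborel.
          (LINT x:{0..}|lborel. k x s * f x) + (LINT x:{0..}|lborel. k x s * g x))"
    unfolding kernel_functional_def by (intro set_lebesgue_integral_cong) auto
  also have "\<dots> = kernel_functional f + kernel_functional g"
    unfolding kernel_functional_def
    using set_integrable_kernel_outer[OF assms(1)] set_integrable_kernel_outer[OF assms(2)]
    by (rule set_integral_add)
  finally show ?thesis .
qed

lemma kernel_functional_scale: "kernel_functional (\<lambda>x. a * f x) = a * kernel_functional f"
  unfolding kernel_functional_def by (simp add: mult.left_commute)

lemma kernel_functional_cong:
  assumes f: "set_integrable lborel {0..} f" and g: "set_integrable lborel {0..} g"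
    and eq: "AE x in lborel. x \<ge> 0 \<longrightarrow> f x = g x"
  shows "kernel_functional f = kernel_functional g"
proof -
  have [measurable]: "(\<lambda>x. indicator {0..} x *\<^sub>R f x) \<in> borel_measurable borel"
    "(\<lambda>x. indicator {0..} x *\<^sub>R g x) \<in> borel_measurable borel"
    using set_integrable_indicator_measurable[OF f] set_integrable_indicator_measurable[OF g]
    by simp_all
  have "(LINT x:{0..}|lborel. k x s * f x) = (LINT x:{0..}|lborel. k x s * g x)" for s
    unfolding set_lebesgue_integral_def indicator_scaleR_mult
    by (rule integral_cong_AE)
       (measurable, use eq in \<open>auto elim!: eventually_mono split: split_indicator\<close>)
  then show ?thesis
    unfolding kernel_functional_def by simp
qed

end

locale malaria_model =
  fixes Lh Lv muv mu0 :: real and muh betah betav delta r1 :: "real \<Rightarrow> real"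
  assumes mu0_pos: "mu0 > 0"
    and muh_ge: "AE a in lborel. a \<ge> 0 \<longrightarrow> muh a \<ge> mu0"
    and Lh_pos: "Lh > 0" and Lv_pos: "Lv > 0" and muv_pos: "muv > 0"
    and betav: "Linf_plus betav" and betah: "Linf_plus betah" and muh: "Linf_plus muh"
    and delta: "Linf_plus delta" and r1: "Linf_plus r1"
    and transmission_pos:
      "(LBINT s:{0..}. LBINT a:{0..}. betah (a + s) * betav a * exp (- mu0 * (a + s))) > 0"
begin

lemma measurable_coefficients [measurable]:
  "betah \<in> borel_measurable borel" "betav \<in> borel_measurable borel"
  "muh \<in> borel_measurable borel" "delta \<in> borel_measurable borel" "r1 \<in> borel_measurable borel"
  using betah betav muh delta r1 by (simp_all add: Linf_plus_def)

lemma borel_measurable_s0h [measurable]: "s0h Lh muh \<in> borel_measurable borel"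
  unfolding s0h_def[abs_def] by measurable

lemma Gam_le:
  assumes "x \<ge> 0" "s \<ge> 0"
  shows "Gam muh r1 delta x s \<le> exp (- mu0 * s)"
proof -
  obtain Cm where "AE a in lborel. a \<ge> 0 \<longrightarrow> 0 \<le> muh a \<and> muh a \<le> Cm"
    using muh by (rule Linf_plusE)
  moreover obtain Cr where "AE a in lborel. a \<ge> 0 \<longrightarrow> 0 \<le> r1 a \<and> r1 a \<le> Cr"
    using r1 by (rule Linf_plusE)
  moreover obtain Cd where "AE a in lborel. a \<ge> 0 \<longrightarrow> 0 \<le> delta a \<and> delta a \<le> Cd"
    using delta by (rule Linf_plusE)
  ultimately have "AE a in lborel. a \<ge> 0 \<longrightarrow>
      mu0 \<le> muh a + r1 a + delta a \<and> muh a + r1 a + delta a \<le> Cm + Cr + Cd"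
    using muh_ge by eventually_elim auto
  from set_integral_interval_lower_bound[OF _ this assms]
  have "mu0 * s \<le> (LBINT u:{x..x+s}. muh u + r1 u + delta u)"
    by measurable
  then show ?thesis
    by (simp add: Gam_def)
qed

lemma s0h_le:
  assumes "a \<ge> 0"
  shows "s0h Lh muh a \<le> Lh * exp (- mu0 * a)"
proof -
  obtain Cm where "AE a in lborel. a \<ge> 0 \<longrightarrow> 0 \<le> muh a \<and> muh a \<le> Cm"
    using muh by (rule Linf_plusE)
  then have "AE a in lborel. a \<ge> 0 \<longrightarrow> mu0 \<le> muh a \<and> muh a \<le> Cm"
    using muh_ge by eventually_elim auto
  from set_integral_interval_lower_bound[OF _ this order_refl assms]
  have "mu0 * a \<le> (LBINT u:{0..a}. muh u)"
    by simp
  then show ?thesis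
    using Lh_pos by (simp add: s0h_def)
qed

lemma s0h_pos: "s0h Lh muh a > 0"
  using Lh_pos by (simp add: s0h_def)

definition transmission_kernel :: "real \<Rightarrow> real \<Rightarrow> complex" where
  "transmission_kernel x s = complex_of_real (betah (x + s) * Gam muh r1 delta x s)"

lemma exp_bounded_transmission_kernel: "\<exists>B. exp_bounded_kernel transmission_kernel mu0 B"
proof -
  obtain B where B: "AE a in lborel. a \<ge> 0 \<longrightarrow> 0 \<le> betah a \<and> betah a \<le> B"
    using betah by (rule Linf_plusE)
  have "AE x in lborel. x \<ge> 0 \<longrightarrow> norm (transmission_kernel x s) \<le> B * exp (- mu0 * s)"
    if "s \<ge> 0" for s
    using AE_lborel_translate[OF B, of s]
  proof eventually_elim
    case (elim x)
    show ?case
    proof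
      assume "x \<ge> 0"
      with elim \<open>s \<ge> 0\<close> have "0 \<le> betah (x + s)" "betah (x + s) \<le> B" by auto
      moreover have "0 < Gam muh r1 delta x s" "Gam muh r1 delta x s \<le> exp (- mu0 * s)"
        using Gam_le \<open>x \<ge> 0\<close> \<open>s \<ge> 0\<close> by (auto simp: Gam_def)
      ultimately show "norm (transmission_kernel x s) \<le> B * exp (- mu0 * s)"
        unfolding transmission_kernel_def norm_of_real by (simp add: abs_mult mult_mono)
    qed
  qed
  moreover have "(\<lambda>(x, s). transmission_kernel x s) \<in> borel_measurable (borel \<Otimes>\<^sub>M borel)"
    unfolding transmission_kernel_def Gam_def by measurable
  ultimately show ?thesis
    using mu0_pos by (auto simp: exp_bounded_kernel_def)
qed

definition human_incidence :: "real \<Rightarrow> complex" where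
  "human_incidence a = complex_of_real (betav a * s0h Lh muh a / muv)"

definition mosquito_incidence :: "(real \<Rightarrow> complex) \<Rightarrow> complex" where
  "mosquito_incidence f = complex_of_real (Lv / muv) *
     (LINT s:{0..}|lborel. LINT x:{0..}|lborel. transmission_kernel x s * f x)"

lemma next_gen_op_eq:
  "next_gen_op Lh Lv muv muh betah betav r1 delta
     = (\<lambda>p. ((\<lambda>a. human_incidence a * snd p), mosquito_incidence (fst p)))"
  by (simp add: fun_eq_iff next_gen_op_def human_incidence_def mosquito_incidence_def
      transmission_kernel_def)

lemma set_integrable_human_incidence: "set_integrable lborel {0..} human_incidence"
proof -
  obtain Bv where Bv: "AE a in lborel. a \<ge> 0 \<longrightarrow> 0 \<le> betav a \<and> betav a \<le> Bv"
    using betav by (rule Linf_plusE)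
  have "set_integrable lborel {0..} (\<lambda>a. Bv * Lh / muv * exp (- mu0 * a))"
    using set_integrable_exp_neg[OF mu0_pos] by (rule set_integrable_mult_right)
  moreover have "set_borel_measurable lborel {0..} human_incidence"
    unfolding set_borel_measurable_def human_incidence_def[abs_def] by measurable
  moreover have "AE a in lborel. a \<in> {0..} \<longrightarrow>
      norm (human_incidence a) \<le> norm (Bv * Lh / muv * exp (- mu0 * a))"
    using Bv
  proof eventually_elim
    case (elim a)
    show ?case
    proof
      assume "a \<in> {0..}"
      with elim have "0 \<le> betav a" "betav a \<le> Bv" by auto
      moreover have "0 < s0h Lh muh a" "s0h Lh muh a \<le> Lh * exp (- mu0 * a)"
        using s0h_pos s0h_le \<open>a \<in> {0..}\<close> by auto
      ultimately have "norm (human_incidence a) \<le> Bv * (Lh * exp (- mu0 * a)) / muv"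
        unfolding human_incidence_def norm_of_real
        using muv_pos by (simp add: divide_right_mono mult_mono)
      also have "\<dots> \<le> norm (Bv * Lh / muv * exp (- mu0 * a))"
        by (simp only: real_norm_def times_divide_eq_left mult.assoc abs_ge_self)
      finally show "norm (human_incidence a) \<le> norm (Bv * Lh / muv * exp (- mu0 * a))" .
    qed
  qed
  ultimately show ?thesis
    by (rule set_integrable_bound)
qed

lemma betav_not_AE_zero: "\<not> (AE a in lborel. a \<ge> 0 \<longrightarrow> betav a = 0)"
proof
  assume zero: "AE a in lborel. a \<ge> 0 \<longrightarrow> betav a = 0"
  have "(LBINT a:{0..}. betah (a + s) * betav a * exp (- mu0 * (a + s))) = 0" for s
    unfolding set_lebesgue_integral_def
    by (rule integral_eq_zero_AE) (use zero in \<open>auto elim!: eventually_mono split: split_indicator\<close>)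
  with transmission_pos show False
    by simp
qed

lemma human_incidence_eq_0_iff: "human_incidence a = 0 \<longleftrightarrow> betav a = 0"
  using s0h_pos[of a] muv_pos by (simp add: human_incidence_def)

lemma human_incidence_not_AE_zero: "\<not> (AE a in lborel. a \<ge> 0 \<longrightarrow> human_incidence a = 0)"
  using betav_not_AE_zero by (simp add: human_incidence_eq_0_iff)

lemma off_diagonal_next_gen_op: "off_diagonal_rank_one human_incidence mosquito_incidence"
proof -
  obtain B where "exp_bounded_kernel transmission_kernel mu0 B"
    using exp_bounded_transmission_kernel ..
  then interpret exp_bounded_kernel transmission_kernel mu0 B .
  have "mosquito_incidence = (\<lambda>f. complex_of_real (Lv / muv) * kernel_functional f)"
    by (simp add: fun_eq_iff mosquito_incidence_def kernel_functional_def)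
  then show ?thesis
    by unfold_locales
      (auto simp: set_integrable_human_incidence human_incidence_not_AE_zero
        kernel_functional_add kernel_functional_scale ring_distribs add_divide_distrib
        intro: kernel_functional_cong)
qed

lemma mosquito_incidence_human_incidence:
  "mosquito_incidence human_incidence = complex_of_real ((Lv / muv) / muv *
     (LBINT s:{0..}. LBINT x:{0..}. betah (x + s) * betav x * s0h Lh muh x * Gam muh r1 delta x s))"
proof -
  have "transmission_kernel x s * human_incidence x = complex_of_real
      (betah (x + s) * betav x * s0h Lh muh x * Gam muh r1 delta x s / muv)" for x s
    by (simp add: transmission_kernel_def human_incidence_def)
  then have "mosquito_incidence human_incidence = complex_of_real (Lv / muv) *
      complex_of_real (LBINT s:{0..}. LBINT x:{0..}.
        betah (x + s) * betav x * s0h Lh muh x * Gam muh r1 delta x s / muv)"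
    by (simp only: mosquito_incidence_def set_integral_complex_of_real)
  then show ?thesis
    by simp
qed

lemma transmission_integral_nonneg:
  "0 \<le> (LBINT s:{0..}. LBINT x:{0..}.
      betah (x + s) * betav x * s0h Lh muh x * Gam muh r1 delta x s)"
proof -
  obtain Bh where Bh: "AE a in lborel. a \<ge> 0 \<longrightarrow> 0 \<le> betah a \<and> betah a \<le> Bh"
    using betah by (rule Linf_plusE)
  obtain Bv where Bv: "AE a in lborel. a \<ge> 0 \<longrightarrow> 0 \<le> betav a \<and> betav a \<le> Bv"
    using betav by (rule Linf_plusE)
  have "0 \<le> (LBINT x:{0..}. betah (x + s) * betav x * s0h Lh muh x * Gam muh r1 delta x s)"
    if "s \<ge> 0" for s
    unfolding set_lebesgue_integral_def
  proof (rule integral_nonneg_AE)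
    show "AE x in lborel. 0 \<le> indicator {0..} x *\<^sub>R
        (betah (x + s) * betav x * s0h Lh muh x * Gam muh r1 delta x s)"
      using AE_lborel_translate[OF Bh, of s] Bv
      by eventually_elim
        (use \<open>s \<ge> 0\<close> in \<open>auto simp: Gam_def intro!: mult_nonneg_nonneg less_imp_le[OF s0h_pos]
          split: split_indicator\<close>)
  qed
  then show ?thesis
    unfolding set_lebesgue_integral_def
    by (intro integral_nonneg_AE AE_I2) (simp split: split_indicator)
qed

end

theorem theorem3p2:
  fixes Lh Lv muv mu0 :: real
    and muh betah betav delta r1 r2 :: "real \<Rightarrow> real"
  assumes "mu0 > 0"
    and "AE a in lborel. a \<ge> 0 \<longrightarrow> muh a \<ge> mu0"
    and "muv \<ge> mu0"
    and "Lh > 0" and "Lv > 0" and "muv > 0"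
    and "Linf_plus betav" and "Linf_plus betah" and "Linf_plus muh"
    and "Linf_plus delta" and "Linf_plus r1" and "Linf_plus r2"
    and "(LBINT s:{0..}. LBINT a:{0..}. betah (a + s) * betav a * exp (- mu0 * (a + s))) > 0"
  shows "spectral_radius (next_gen_op Lh Lv muv muh betah betav r1 delta)
           = R0 Lh Lv muv muh betah betav r1 delta"
proof -
  \<comment> \<open>Neither \<open>muv \<ge> mu0\<close> nor the loss-of-immunity rate \<open>r2\<close> enters \<open>K\<close>,
    so those two hypotheses are unused.\<close>
  interpret malaria_model Lh Lv muv mu0 muh betah betav delta r1
    using assms by unfold_locales auto
  interpret off_diagonal_rank_one human_incidence mosquito_incidence
    by (rule off_diagonal_next_gen_op)
  have "next_gen_op Lh Lv muv muh betah betav r1 delta = K"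
    by (simp add: fun_eq_iff next_gen_op_eq K_def)
  then have "spectral_radius (next_gen_op Lh Lv muv muh betah betav r1 delta)
      = sqrt (cmod (mosquito_incidence human_incidence))"
    by (simp add: spectral_radius_K)
  also have "\<dots> = R0 Lh Lv muv muh betah betav r1 delta"
    using transmission_integral_nonneg Lv_pos muv_pos
    unfolding mosquito_incidence_human_incidence norm_of_real R0_def by simp
  finally show ?thesis .
qed

end
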